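(* Equivalence $\sim$ of extremal assignments of order $n$ is an equivalence relation, i.e. it is reflexive, symmetric and transitive.
   Context: Let $n\ge 3$ and $[n]=\{1,\dots,n\}$. A stable $n$-labeled tree is a finite tree with exactly $n$ leaves, labeled bijectively by $[n]$, in which every non-leaf (internal) vertex has degree at least 3. $V(G)$ denotes the set of internal vertices of $G$, and $S(n)$ the set of stable $n$-labeled trees (up to label-preserving isomorphism). We write $G\rightsquigarrow G'$ ($G'$ is a contraction of $G$) if $G'$ is obtained from $G$ by collapsing connected sets of internal vertices (together with the edges among them) to single vertices; this induces a surjection $\pi:V(G)\to V(G')$, and we write $\{v_1,\dots,v_k\}\rightsquigarrow v'$ when $\pi^{-1}(v')=\{v_1,\dots,v_k\}$. An extremal assignment of order $n$ is a rule $Z$ assigning to every $G\in S(n)$ a subset $Z(G)\subset V(G)$ such that (a) $Z(G)\neq V(G)$ for all $G$, and (b) whenever $G\rightsquigarrow G'$ and $\{v_1,\dots,v_k\}\rightsquigarrow v'$, we have $v'\in Z(G')$ if and only if $v_1,\dots,v_k\in Z(G)$. For $W\subset V(G)$, a vertex $v\in W$ is isolated (in $W$) if no vertex adjacent to $v$ lies in $W$. Two extremal assignments $Z_1,Z_2$ of order $n$ are equivalent, $Z_1\sim Z_2$, if for every $G\in S(n)$ each vertex of $Z_1(G)\setminus Z_2(G)$ is a vertex of degree 3 that is isolated in $Z_1(G)\setminus Z_2(G)$, and likewise each vertex of $Z_2(G)\setminus Z_1(G)$ is of degree 3 and isolated in $Z_2(G)\setminus Z_1(G)$. *)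

theory Defs
  imports Main
begin

text \<open>Vertices of a labeled tree: leaves carry their label, internal vertices a name.\<close>
datatype node = Lf nat | Inn nat

record ltree =
  ints :: "nat set"                 (* internal vertices V(G) *)
  edges :: "(node \<times> node) set"

definition nodes :: "nat \<Rightarrow> ltree \<Rightarrow> node set" where
  "nodes n G = Lf ` {1..n} \<union> Inn ` ints G"

definition deg :: "ltree \<Rightarrow> node \<Rightarrow> nat" where
  "deg G a = card {b. (a, b) \<in> edges G}"

definition adj :: "ltree \<Rightarrow> node \<Rightarrow> node \<Rightarrow> bool" where
  "adj G a b \<longleftrightarrow> (a, b) \<in> edges G"

definition is_tree :: "nat \<Rightarrow> ltree \<Rightarrow> bool" where
  "is_tree n G \<longleftrightarrow> finite (ints G)
     \<and> edges G \<subseteq> nodes n G \<times> nodes n G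
     \<and> sym (edges G) \<and> irrefl (edges G)
     \<and> (\<forall>a\<in>nodes n G. \<forall>b\<in>nodes n G. (a, b) \<in> (edges G)\<^sup>*)
     \<and> card {{a, b} | a b. (a, b) \<in> edges G} = card (nodes n G) - 1"

definition stable_tree :: "nat \<Rightarrow> ltree \<Rightarrow> bool" where
  "stable_tree n G \<longleftrightarrow> is_tree n G
     \<and> (\<forall>i\<in>{1..n}. deg G (Lf i) = 1)
     \<and> (\<forall>v\<in>ints G. deg G (Inn v) \<ge> 3)"

fun lift :: "(nat \<Rightarrow> nat) \<Rightarrow> node \<Rightarrow> node" where
  "lift \<pi> (Lf i) = Lf i"
| "lift \<pi> (Inn v) = Inn (\<pi> v)"

definition contraction :: "nat \<Rightarrow> ltree \<Rightarrow> ltree \<Rightarrow> (nat \<Rightarrow> nat) \<Rightarrow> bool" where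
  "contraction n G G' \<pi> \<longleftrightarrow> stable_tree n G \<and> stable_tree n G'
     \<and> \<pi> ` ints G = ints G'
     \<and> (\<forall>v'\<in>ints G'. let F = {v\<in>ints G. \<pi> v = v'} in
          \<forall>a\<in>F. \<forall>b\<in>F. (Inn a, Inn b) \<in> (edges G \<inter> (Inn ` F \<times> Inn ` F))\<^sup>*)
     \<and> edges G' = {(lift \<pi> a, lift \<pi> b) | a b. (a, b) \<in> edges G \<and> lift \<pi> a \<noteq> lift \<pi> b}"

definition extremal_assignment :: "nat \<Rightarrow> (ltree \<Rightarrow> nat set) \<Rightarrow> bool" where
  "extremal_assignment n Z \<longleftrightarrow>
     (\<forall>G. stable_tree n G \<longrightarrow> Z G \<subseteq> ints G \<and> Z G \<noteq> ints G)
   \<and> (\<forall>G G' \<pi>. contraction n G G' \<pi> \<longrightarrow>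
        (\<forall>v'\<in>ints G'. v' \<in> Z G' \<longleftrightarrow> (\<forall>v\<in>ints G. \<pi> v = v' \<longrightarrow> v \<in> Z G)))"

definition ExtAssign :: "nat \<Rightarrow> (ltree \<Rightarrow> nat set) set" where
  "ExtAssign n = {Z. extremal_assignment n Z}"

definition deg3_isolated :: "ltree \<Rightarrow> nat set \<Rightarrow> bool" where
  "deg3_isolated G W \<longleftrightarrow> (\<forall>v\<in>W. deg G (Inn v) = 3 \<and> (\<forall>w\<in>W. \<not> adj G (Inn v) (Inn w)))"

definition ext_equiv :: "nat \<Rightarrow> (ltree \<Rightarrow> nat set) \<Rightarrow> (ltree \<Rightarrow> nat set) \<Rightarrow> bool" where
  "ext_equiv n Z1 Z2 \<longleftrightarrow> (\<forall>G. stable_tree n G \<longrightarrow>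
      deg3_isolated G (Z1 G - Z2 G) \<and> deg3_isolated G (Z2 G - Z1 G))"

end

theory Submission
  imports Defs
begin

text \<open>Reflexivity and symmetry are immediate, and so is the degree condition for transitivity.
  The point is isolation: if two adjacent vertices of Z1 - Z3 are split by Z2, then one lies in
  Z1 - Z2 and its neighbour in Z1. Contracting the edge between them gives a stable tree in which,
  by the contraction axiom, the merged vertex lies in Z1 - Z2, yet it has degree
  deg a + deg b - 2 \<ge> 4. That the contraction is again a stable tree rests on trees having no
  triangles, so that no neighbours or edges are identified besides the contracted one.\<close>

definition uedges :: "('a \<times> 'a) set \<Rightarrow> 'a set set" where
  "uedges E = {{a, b} | a b. (a, b) \<in> E}"

definition tree_on :: "'a set \<Rightarrow> ('a \<times> 'a) set \<Rightarrow> bool" where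
  "tree_on V E \<longleftrightarrow> finite V \<and> E \<subseteq> V \<times> V \<and> sym E \<and> irrefl E
     \<and> (\<forall>a\<in>V. \<forall>b\<in>V. (a, b) \<in> E\<^sup>*) \<and> card (uedges E) = card V - 1"

lemma is_tree_iff_tree_on:
  "is_tree n G \<longleftrightarrow> finite (ints G) \<and> tree_on (nodes n G) (edges G)"
  unfolding is_tree_def tree_on_def uedges_def nodes_def by auto

lemma finite_uedges: "finite V \<Longrightarrow> E \<subseteq> V \<times> V \<Longrightarrow> finite (uedges E)"
  unfolding uedges_def by (rule finite_subset[of _ "Pow V"]) auto

text \<open>Each vertex other than the root is joined to a neighbour closer to the root; this
  parent map is injective on edges.\<close>
lemma card_le_Suc_card_uedges:
  assumes fin: "finite (uedges E)" and fV: "finite V" and sE: "sym E" and r: "r \<in> V"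
    and conn: "\<forall>x\<in>V. (r, x) \<in> E\<^sup>*"
  shows "card V \<le> card (uedges E) + 1"
proof -
  define d where "d x = (LEAST k. (r, x) \<in> E ^^ k)" for x
  have d_path: "(r, x) \<in> E ^^ d x" if "x \<in> V" for x
  proof -
    from conn that obtain k where "(r, x) \<in> E ^^ k" using rtrancl_power by blast
    thus ?thesis unfolding d_def by (rule LeastI)
  qed
  have closer: "\<exists>y. (x, y) \<in> E \<and> d y < d x" if "x \<in> V" "x \<noteq> r" for x
  proof -
    have h: "(r, x) \<in> E ^^ d x" using d_path that by blast
    have "d x \<noteq> 0" using h that by (metis pair_in_Id_conv relpow.simps(1))
    then obtain m where m: "d x = Suc m" by (cases "d x") auto
    with h obtain y where y1: "(r, y) \<in> E ^^ m" and y2: "(y, x) \<in> E"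
      by (metis relpow_Suc_E)
    have "d y \<le> m" unfolding d_def using y1 by (rule Least_le)
    moreover have "(x, y) \<in> E" using y2 sE by (meson symD)
    ultimately show ?thesis using m by auto
  qed
  define p where "p x = (SOME y. (x, y) \<in> E \<and> d y < d x)" for x
  have p: "(x, p x) \<in> E \<and> d (p x) < d x" if "x \<in> V" "x \<noteq> r" for x
    unfolding p_def using someI_ex[OF closer[OF that]] .
  have "inj_on (\<lambda>x. {x, p x}) (V - {r})"
  proof (rule inj_onI)
    fix x y assume x: "x \<in> V - {r}" and y: "y \<in> V - {r}" and e: "{x, p x} = {y, p y}"
    show "x = y"
    proof (rule ccontr)
      assume "x \<noteq> y"
      with e have "x = p y" "y = p x" by (auto simp: doubleton_eq_iff)
      thus False using p[of x] p[of y] x y by auto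
    qed
  qed
  moreover have "(\<lambda>x. {x, p x}) ` (V - {r}) \<subseteq> uedges E" unfolding uedges_def using p by blast
  ultimately have "card (V - {r}) \<le> card (uedges E)"
    using card_inj_on_le fin by blast
  thus ?thesis using r fV by (simp add: card_Diff_singleton)
qed

text \<open>Deleting one edge of a triangle keeps the graph connected but leaves too few edges.\<close>
lemma tree_on_no_triangle:
  assumes tree: "tree_on V E"
    and ab: "(a, b) \<in> E" and bc: "(b, c) \<in> E" and ac: "(a, c) \<in> E"
  shows False
proof -
  have fV: "finite V" and sub: "E \<subseteq> V \<times> V" and sE: "sym E" and iE: "irrefl E"
    and conn: "\<forall>x\<in>V. \<forall>y\<in>V. (x, y) \<in> E\<^sup>*" and cardE: "card (uedges E) = card V - 1"
    using tree unfolding tree_on_def by auto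
  have ne: "a \<noteq> b" "b \<noteq> c" "a \<noteq> c" using ab bc ac iE by (auto simp: irrefl_def)
  define E' where "E' = E - {(a, c), (c, a)}"
  have uedges_E': "uedges E' = uedges E - {{a, c}}"
  proof (intro set_eqI iffI)
    fix e assume "e \<in> uedges E'"
    then obtain x y where "e = {x, y}" "(x, y) \<in> E" "(x, y) \<noteq> (a, c)" "(x, y) \<noteq> (c, a)"
      unfolding uedges_def E'_def by blast
    thus "e \<in> uedges E - {{a, c}}" unfolding uedges_def by (auto simp: doubleton_eq_iff)
  next
    fix e assume "e \<in> uedges E - {{a, c}}"
    then obtain x y where "e = {x, y}" "(x, y) \<in> E" "{x, y} \<noteq> {a, c}"
      unfolding uedges_def by blast
    thus "e \<in> uedges E'" unfolding uedges_def E'_def by auto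
  qed
  have finU: "finite (uedges E)" using finite_uedges[OF fV sub] .
  have "{a, c} \<in> uedges E" using ac unfolding uedges_def by blast
  hence card_E': "card (uedges E') = card V - 2"
    using cardE finU by (simp add: uedges_E' card_Diff_singleton)
  have "(a, b) \<in> E'" "(b, c) \<in> E'" "(b, a) \<in> E'" "(c, b) \<in> E'"
    using ab bc ne sE unfolding E'_def by (auto dest: symD)
  hence "(a, c) \<in> E'\<^sup>*" "(c, a) \<in> E'\<^sup>*"
    by (meson converse_rtrancl_into_rtrancl r_into_rtrancl)+
  hence "E \<subseteq> E'\<^sup>*" unfolding E'_def by auto
  hence "E\<^sup>* \<subseteq> E'\<^sup>*" by (metis rtrancl_subset_rtrancl)
  have aV: "a \<in> V" using ab sub by auto
  have "sym E'" using sE unfolding E'_def sym_def by auto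
  hence "card V \<le> card (uedges E') + 1"
    using card_le_Suc_card_uedges[of E' V a] finU fV conn \<open>E\<^sup>* \<subseteq> E'\<^sup>*\<close> aV
    by (auto simp: uedges_E')
  moreover have "card V \<ge> 3"
  proof -
    have "{a, b, c} \<subseteq> V" using ab bc sub by auto
    hence "card {a, b, c} \<le> card V" using fV card_mono by blast
    thus ?thesis using ne by simp
  qed
  ultimately show False using card_E' by linarith
qed

definition merge_vertex :: "'a \<Rightarrow> 'a \<Rightarrow> 'a \<Rightarrow> 'a" where
  "merge_vertex a b x = (if x = b then a else x)"

definition contract_edges :: "('a \<Rightarrow> 'b) \<Rightarrow> ('a \<times> 'a) set \<Rightarrow> ('b \<times> 'b) set" where
  "contract_edges f E = {(f x, f y) | x y. (x, y) \<in> E \<and> f x \<noteq> f y}"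

lemma merge_vertex_eq_iff: "merge_vertex a b x = a \<longleftrightarrow> x = a \<or> x = b"
  unfolding merge_vertex_def by auto

lemma merge_vertex_other [simp]: "x \<noteq> b \<Longrightarrow> merge_vertex a b x = x"
  unfolding merge_vertex_def by simp

lemma merge_vertex_left [simp]: "merge_vertex a b a = a"
  unfolding merge_vertex_def by simp

lemma merge_vertex_right [simp]: "merge_vertex a b b = a"
  unfolding merge_vertex_def by simp

lemma contract_edgesI: "(x, y) \<in> E \<Longrightarrow> f x \<noteq> f y \<Longrightarrow> (f x, f y) \<in> contract_edges f E"
  unfolding contract_edges_def by blast

lemma contract_edgesE:
  assumes "(u, v) \<in> contract_edges f E"
  obtains x y where "(x, y) \<in> E" "f x \<noteq> f y" "u = f x" "v = f y"
  using assms unfolding contract_edges_def by blast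

locale tree_edge =
  fixes V :: "'a set" and E :: "('a \<times> 'a) set" and A B :: 'a
  assumes tree: "tree_on V E" and edge: "(A, B) \<in> E"
begin

abbreviation L :: "'a \<Rightarrow> 'a" where "L \<equiv> merge_vertex A B"

abbreviation E' :: "('a \<times> 'a) set" where "E' \<equiv> contract_edges L E"

lemma finite_V: "finite V" and edges_subset: "E \<subseteq> V \<times> V" and sym_E: "sym E"
  and irrefl_E: "irrefl E" and connected: "\<forall>x\<in>V. \<forall>y\<in>V. (x, y) \<in> E\<^sup>*"
  and card_uedges: "card (uedges E) = card V - 1"
  using tree unfolding tree_on_def by auto

lemma edge_sym: "(x, y) \<in> E \<Longrightarrow> (y, x) \<in> E"
  using sym_E by (rule symD)

lemma no_loop: "(x, x) \<notin> E"
  using irrefl_E by (simp add: irrefl_def)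

lemma A_neq_B: "A \<noteq> B"
  using edge no_loop by auto

lemma A_in_V: "A \<in> V" and B_in_V: "B \<in> V"
  using edge edges_subset by auto

lemma no_common_neighbour: "(x, A) \<in> E \<Longrightarrow> (x, B) \<notin> E"
  using tree_on_no_triangle[OF tree _ edge] by blast

lemma finite_neighbours: "finite {y. (x, y) \<in> E}"
  using finite_subset[OF _ finite_V, of "{y. (x, y) \<in> E}"] edges_subset by auto

lemma neighbours_contract_other:
  assumes "x \<noteq> A" "x \<noteq> B"
  shows "card {y. (x, y) \<in> E'} = card {y. (x, y) \<in> E}"
proof -
  have "{y. (x, y) \<in> E'} = L ` {y. (x, y) \<in> E}"
  proof (intro set_eqI iffI)
    fix z assume "z \<in> {y. (x, y) \<in> E'}"
    then obtain p q where pq: "(p, q) \<in> E" "x = L p" "z = L q"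
      by (auto elim: contract_edgesE)
    have "p = x" using pq(2) assms by (cases "p = B") simp_all
    then show "z \<in> L ` {y. (x, y) \<in> E}" using pq by blast
  next
    fix z assume "z \<in> L ` {y. (x, y) \<in> E}"
    then obtain q where q: "(x, q) \<in> E" "z = L q" by blast
    have "L q \<noteq> x" using assms q no_loop by (cases "q = B") auto
    then show "z \<in> {y. (x, y) \<in> E'}" using contract_edgesI[OF q(1), of L] q assms by simp
  qed
  moreover have "inj_on L {y. (x, y) \<in> E}"
  proof (rule inj_onI)
    fix p q assume "p \<in> {y. (x, y) \<in> E}" "q \<in> {y. (x, y) \<in> E}" "L p = L q"
    then show "p = q"
      using no_common_neighbour[of x] edge_sym unfolding merge_vertex_def
      by (auto split: if_splits)
  qed
  ultimately show ?thesis by (simp add: card_image)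
qed

lemma neighbours_contract_merged:
  "card {y. (A, y) \<in> E'} = card {y. (A, y) \<in> E} + card {y. (B, y) \<in> E} - 2"
proof -
  have nbrs: "{y. (A, y) \<in> E'} = ({y. (A, y) \<in> E} - {B}) \<union> ({y. (B, y) \<in> E} - {A})"
  proof (intro set_eqI iffI)
    fix z assume "z \<in> {y. (A, y) \<in> E'}"
    then obtain p q where pq: "(p, q) \<in> E" "L p \<noteq> L q" "A = L p" "z = L q"
      by (auto elim: contract_edgesE)
    then have "p = A \<or> p = B" "q \<noteq> A" "q \<noteq> B"
      using merge_vertex_eq_iff by metis+
    then show "z \<in> ({y. (A, y) \<in> E} - {B}) \<union> ({y. (B, y) \<in> E} - {A})"
      using pq by auto
  next
    fix z assume z: "z \<in> ({y. (A, y) \<in> E} - {B}) \<union> ({y. (B, y) \<in> E} - {A})"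
    then have "z \<noteq> A" "z \<noteq> B" using no_loop by auto
    moreover obtain p where "p = A \<or> p = B" "(p, z) \<in> E" using z by auto
    ultimately show "z \<in> {y. (A, y) \<in> E'}"
      using contract_edgesI[of p z E L] by (auto simp: merge_vertex_def)
  qed
  have "({y. (A, y) \<in> E} - {B}) \<inter> ({y. (B, y) \<in> E} - {A}) = {}"
    using no_common_neighbour edge_sym by blast
  then have "card {y. (A, y) \<in> E'} = card ({y. (A, y) \<in> E} - {B}) + card ({y. (B, y) \<in> E} - {A})"
    unfolding nbrs using finite_neighbours by (simp add: card_Un_disjoint)
  also have "\<dots> = card {y. (A, y) \<in> E} + card {y. (B, y) \<in> E} - 2"
  proof -
    have "card {y. (A, y) \<in> E} > 0" "card {y. (B, y) \<in> E} > 0"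
      using edge edge_sym[OF edge] finite_neighbours by (auto simp: card_gt_0_iff)
    then show ?thesis using edge edge_sym[OF edge] finite_neighbours
      by (simp add: card_Diff_singleton)
  qed
  finally show ?thesis .
qed

lemma merge_in_V: "x \<in> V \<Longrightarrow> L x \<in> V - {B}"
  using A_in_V A_neq_B by (cases "x = B") auto

lemma rtrancl_contract: "(x, y) \<in> E\<^sup>* \<Longrightarrow> (L x, L y) \<in> E'\<^sup>*"
proof (induction rule: rtrancl_induct)
  case (step y z)
  then show ?case
    by (cases "L y = L z") (auto intro: rtrancl_into_rtrancl contract_edgesI)
qed simp

lemma merge_image_doubleton:
  assumes "{p, q} \<noteq> {A, B}" "p \<noteq> q"
  shows "L p \<noteq> L q"
  using assms A_neq_B unfolding merge_vertex_def by (auto split: if_splits)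

lemma uedges_contract: "uedges E' = (\<lambda>e. L ` e) ` (uedges E - {{A, B}})"
proof (intro set_eqI iffI)
  fix e assume "e \<in> uedges E'"
  then obtain p q where pq: "(p, q) \<in> E" "L p \<noteq> L q" "e = L ` {p, q}"
    unfolding uedges_def by (auto elim: contract_edgesE)
  have "{p, q} \<noteq> {A, B}" using pq(2) A_neq_B by (auto simp: doubleton_eq_iff)
  moreover have "{p, q} \<in> uedges E" using pq(1) unfolding uedges_def by blast
  ultimately show "e \<in> (\<lambda>e. L ` e) ` (uedges E - {{A, B}})" using pq(3) by blast
next
  fix e assume "e \<in> (\<lambda>e. L ` e) ` (uedges E - {{A, B}})"
  then obtain p q where pq: "(p, q) \<in> E" "{p, q} \<noteq> {A, B}" "e = {L p, L q}"
    unfolding uedges_def by blast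
  have "p \<noteq> q" using pq(1) no_loop by auto
  then have "L p \<noteq> L q" using pq(2) by (rule merge_image_doubleton[rotated])
  then show "e \<in> uedges E'" using contract_edgesI[OF pq(1)] pq(3) unfolding uedges_def by blast
qed

lemma uedge_cases:
  assumes "e \<in> uedges E - {{A, B}}"
  obtains "A \<notin> e" "B \<notin> e" "L ` e = e"
  | x z where "x \<in> {A, B}" "z \<notin> {A, B}" "(x, z) \<in> E" "e = {x, z}" "L ` e = {A, z}"
proof -
  obtain p q where pq: "e = {p, q}" "(p, q) \<in> E" using assms unfolding uedges_def by blast
  have "p \<noteq> q" using pq(2) no_loop by auto
  have "{p, q} \<noteq> {A, B}" using assms pq(1) by blast
  then consider "p \<notin> {A, B}" "q \<notin> {A, B}" | "p \<in> {A, B}" "q \<notin> {A, B}"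
    | "p \<notin> {A, B}" "q \<in> {A, B}"
    using \<open>p \<noteq> q\<close> by blast
  then show thesis
  proof cases
    case 1 then show ?thesis using that(1) pq by auto
  next
    case 2 then show ?thesis using that(2)[of p q] pq by (auto simp: merge_vertex_def)
  next
    case 3 then show ?thesis using that(2)[of q p] pq edge_sym by (auto simp: merge_vertex_def)
  qed
qed

text \<open>Two edges with the same image share their vertex outside {A, B}; they cannot meet
  {A, B} in different vertices, for that would close a triangle.\<close>
lemma inj_on_contract_uedges: "inj_on (\<lambda>e. L ` e) (uedges E - {{A, B}})"
proof (rule inj_onI)
  fix e1 e2 assume e1: "e1 \<in> uedges E - {{A, B}}" and e2: "e2 \<in> uedges E - {{A, B}}"
    and eq: "L ` e1 = L ` e2"
  show "e1 = e2"
  proof (cases rule: uedge_cases[OF e1])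
    case 1
    then show ?thesis
    proof (cases rule: uedge_cases[OF e2])
      case 1 then show ?thesis using \<open>L ` e1 = e1\<close> eq by simp
    next
      case (2 x z) then show ?thesis using \<open>L ` e1 = e1\<close> \<open>A \<notin> e1\<close> eq by auto
    qed
  next
    case (2 x1 z1)
    then show ?thesis
    proof (cases rule: uedge_cases[OF e2])
      case 1 then show ?thesis using \<open>L ` e1 = {A, z1}\<close> eq by auto
    next
      case (2 x2 z2)
      have "z1 = z2" using \<open>L ` e1 = {A, z1}\<close> \<open>L ` e2 = {A, z2}\<close> \<open>z1 \<notin> {A, B}\<close> \<open>z2 \<notin> {A, B}\<close> eq
        by (auto simp: doubleton_eq_iff)
      moreover have "x1 = x2"
        using \<open>x1 \<in> {A, B}\<close> \<open>x2 \<in> {A, B}\<close> \<open>(x1, z1) \<in> E\<close> \<open>(x2, z2) \<in> E\<close> \<open>z1 = z2\<close>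
          no_common_neighbour[of z1] edge_sym by blast
      ultimately show ?thesis using \<open>e1 = {x1, z1}\<close> \<open>e2 = {x2, z2}\<close> by simp
    qed
  qed
qed

lemma card_uedges_contract: "card (uedges E') = card (V - {B}) - 1"
proof -
  have "finite (uedges E)" using finite_uedges[OF finite_V edges_subset] .
  moreover have "{A, B} \<in> uedges E" using edge unfolding uedges_def by blast
  ultimately show ?thesis
    using card_uedges finite_V B_in_V
    by (simp add: uedges_contract card_image[OF inj_on_contract_uedges] card_Diff_singleton)
qed

theorem tree_on_contract: "tree_on (V - {B}) E'"
  unfolding tree_on_def
proof (intro conjI)
  show "finite (V - {B})" using finite_V by simp
  show "E' \<subseteq> (V - {B}) \<times> (V - {B})"
    using edges_subset merge_in_V by (fastforce elim: contract_edgesE)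
  show "sym E'"
    by (rule symI) (auto elim!: contract_edgesE intro: contract_edgesI edge_sym)
  show "irrefl E'"
    unfolding irrefl_def by (auto elim: contract_edgesE)
  show "\<forall>x\<in>V - {B}. \<forall>y\<in>V - {B}. (x, y) \<in> E'\<^sup>*"
    using connected rtrancl_contract by (metis DiffD1 DiffD2 insertI1 merge_vertex_other)
  show "card (uedges E') = card (V - {B}) - 1"
    by (rule card_uedges_contract)
qed

end

definition contract_tree :: "ltree \<Rightarrow> nat \<Rightarrow> nat \<Rightarrow> ltree" where
  "contract_tree G a b =
     \<lparr>ints = ints G - {b}, edges = contract_edges (lift (merge_vertex a b)) (edges G)\<rparr>"

lemma ints_contract_tree [simp]: "ints (contract_tree G a b) = ints G - {b}"
  unfolding contract_tree_def by simp

lemma lift_merge_vertex: "lift (merge_vertex a b) = merge_vertex (Inn a) (Inn b)"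
proof
  fix x show "lift (merge_vertex a b) x = merge_vertex (Inn a) (Inn b) x"
    by (cases x) (simp_all add: merge_vertex_def)
qed

lemma stable_tree_iff:
  "stable_tree n G \<longleftrightarrow> finite (ints G) \<and> tree_on (nodes n G) (edges G)
     \<and> (\<forall>i\<in>{1..n}. deg G (Lf i) = 1) \<and> (\<forall>v\<in>ints G. 3 \<le> deg G (Inn v))"
  unfolding stable_tree_def is_tree_iff_tree_on by simp

lemma stable_tree_edge_sym: "stable_tree n G \<Longrightarrow> (x, y) \<in> edges G \<Longrightarrow> (y, x) \<in> edges G"
  unfolding stable_tree_iff tree_on_def by (auto dest: symD)

context
  fixes n G a b
  assumes st: "stable_tree n G" and a: "a \<in> ints G" and b: "b \<in> ints G"
    and ab: "(Inn a, Inn b) \<in> edges G"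
begin

interpretation tree_edge "nodes n G" "edges G" "Inn a" "Inn b"
  using st ab by unfold_locales (simp_all add: stable_tree_iff)

lemma edges_contract_tree: "edges (contract_tree G a b) = E'"
  by (simp add: contract_tree_def lift_merge_vertex)

lemma nodes_contract_tree: "nodes n (contract_tree G a b) = nodes n G - {Inn b}"
  unfolding nodes_def contract_tree_def by auto

lemma deg_contract_tree_merged:
  "deg (contract_tree G a b) (Inn a) = deg G (Inn a) + deg G (Inn b) - 2"
  unfolding deg_def edges_contract_tree by (rule neighbours_contract_merged)

lemma stable_tree_contract_tree: "stable_tree n (contract_tree G a b)"
  unfolding stable_tree_iff
proof (intro conjI ballI)
  show "finite (ints (contract_tree G a b))"
    using st by (simp add: stable_tree_iff)
  show "tree_on (nodes n (contract_tree G a b)) (edges (contract_tree G a b))"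
    unfolding nodes_contract_tree edges_contract_tree by (rule tree_on_contract)
  show "deg (contract_tree G a b) (Lf i) = 1" if "i \<in> {1..n}" for i
    using st that neighbours_contract_other[of "Lf i"]
    by (simp add: deg_def edges_contract_tree stable_tree_iff)
  show "3 \<le> deg (contract_tree G a b) (Inn v)" if "v \<in> ints (contract_tree G a b)" for v
  proof (cases "v = a")
    case True
    have "3 \<le> deg G (Inn a)" "3 \<le> deg G (Inn b)" using st a b by (simp_all add: stable_tree_iff)
    then show ?thesis using True by (simp add: deg_contract_tree_merged)
  next
    case False
    then have "deg (contract_tree G a b) (Inn v) = deg G (Inn v)"
      using that neighbours_contract_other[of "Inn v"]
      by (simp add: deg_def edges_contract_tree)
    then show ?thesis using st that by (simp add: stable_tree_iff)
  qed
qed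

lemma contraction_contract_tree: "contraction n G (contract_tree G a b) (merge_vertex a b)"
  unfolding contraction_def
proof (intro conjI ballI)
  show "stable_tree n G" by (rule st)
  show "stable_tree n (contract_tree G a b)" by (rule stable_tree_contract_tree)
  show "merge_vertex a b ` ints G = ints (contract_tree G a b)"
    using a b A_neq_B unfolding merge_vertex_def by force
  show "edges (contract_tree G a b) = {(lift (merge_vertex a b) x, lift (merge_vertex a b) y) |x y.
      (x, y) \<in> edges G \<and> lift (merge_vertex a b) x \<noteq> lift (merge_vertex a b) y}"
    unfolding contract_tree_def contract_edges_def by simp
  fix v' assume "v' \<in> ints (contract_tree G a b)"
  show "let F = {v \<in> ints G. merge_vertex a b v = v'}
        in \<forall>x\<in>F. \<forall>y\<in>F. (Inn x, Inn y) \<in> (edges G \<inter> Inn ` F \<times> Inn ` F)\<^sup>*"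
    unfolding Let_def
  proof (intro ballI)
    fix x y assume x: "x \<in> {v \<in> ints G. merge_vertex a b v = v'}"
      and y: "y \<in> {v \<in> ints G. merge_vertex a b v = v'}"
    show "(Inn x, Inn y) \<in> (edges G \<inter> Inn ` {v \<in> ints G. merge_vertex a b v = v'}
        \<times> Inn ` {v \<in> ints G. merge_vertex a b v = v'})\<^sup>*"
    proof (cases "x = y")
      case False
      then have "{x, y} = {a, b}" using x y by (auto simp: merge_vertex_def split: if_splits)
      then have "(Inn x, Inn y) \<in> edges G"
        using ab edge_sym by (auto simp: doubleton_eq_iff)
      then show ?thesis using x y by (intro r_into_rtrancl) auto
    qed simp
  qed
qed

lemma extremal_contract_tree_merged:
  assumes "extremal_assignment n Z"
  shows "a \<in> Z (contract_tree G a b) \<longleftrightarrow> a \<in> Z G \<and> b \<in> Z G"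
proof -
  have "a \<in> ints (contract_tree G a b)" using a A_neq_B by simp
  then have "a \<in> Z (contract_tree G a b) \<longleftrightarrow> (\<forall>v\<in>ints G. merge_vertex a b v = a \<longrightarrow> v \<in> Z G)"
    using assms contraction_contract_tree unfolding extremal_assignment_def by blast
  also have "\<dots> \<longleftrightarrow> a \<in> Z G \<and> b \<in> Z G"
    using a b by (auto simp: merge_vertex_eq_iff)
  finally show ?thesis .
qed

end

lemma ext_equiv_diff_not_adjacent:
  assumes Z1: "extremal_assignment n Z1" and Z2: "extremal_assignment n Z2"
    and equiv: "ext_equiv n Z1 Z2" and st: "stable_tree n G"
    and ab: "(Inn a, Inn b) \<in> edges G" and a: "a \<in> Z1 G - Z2 G" and b: "b \<in> Z1 G"
  shows False
proof -
  have ints: "a \<in> ints G" "b \<in> ints G" using Z1 st a b unfolding extremal_assignment_def by auto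
  let ?G' = "contract_tree G a b"
  have "a \<in> Z1 ?G' - Z2 ?G'"
    using extremal_contract_tree_merged[OF st ints ab Z1]
      extremal_contract_tree_merged[OF st ints ab Z2] a b by blast
  then have "deg ?G' (Inn a) = 3"
    using equiv stable_tree_contract_tree[OF st ints ab]
    unfolding ext_equiv_def deg3_isolated_def by blast
  moreover have "deg G (Inn a) \<ge> 3" "deg G (Inn b) \<ge> 3"
    using st ints by (auto simp: stable_tree_iff)
  ultimately show False using deg_contract_tree_merged[OF st ints ab] by simp
qed

lemma ext_equiv_refl: "ext_equiv n Z Z"
  unfolding ext_equiv_def deg3_isolated_def by simp

lemma ext_equiv_sym: "ext_equiv n Z1 Z2 \<Longrightarrow> ext_equiv n Z2 Z1"
  unfolding ext_equiv_def by blast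

lemma deg3_isolated_diff_trans:
  assumes Z1: "extremal_assignment n Z1" and Z2: "extremal_assignment n Z2"
    and e12: "ext_equiv n Z1 Z2" and e23: "ext_equiv n Z2 Z3" and st: "stable_tree n G"
  shows "deg3_isolated G (Z1 G - Z3 G)"
  unfolding deg3_isolated_def
proof (intro ballI conjI notI)
  have d12: "deg3_isolated G (Z1 G - Z2 G)" and d23: "deg3_isolated G (Z2 G - Z3 G)"
    using e12 e23 st unfolding ext_equiv_def by blast+
  fix v assume v: "v \<in> Z1 G - Z3 G"
  show "deg G (Inn v) = 3"
    using v d12 d23 unfolding deg3_isolated_def by (cases "v \<in> Z2 G") auto
  fix w assume w: "w \<in> Z1 G - Z3 G" and "adj G (Inn v) (Inn w)"
  then have vw: "(Inn v, Inn w) \<in> edges G" and wv: "(Inn w, Inn v) \<in> edges G"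
    using stable_tree_edge_sym[OF st] unfolding adj_def by blast+
  consider "v \<in> Z2 G" "w \<in> Z2 G" | "v \<notin> Z2 G" "w \<notin> Z2 G"
    | "v \<in> Z2 G" "w \<notin> Z2 G" | "v \<notin> Z2 G" "w \<in> Z2 G" by blast
  then show False
  proof cases
    case 1 then show ?thesis using v w vw d23 unfolding deg3_isolated_def adj_def by blast
  next
    case 2 then show ?thesis using v w vw d12 unfolding deg3_isolated_def adj_def by blast
  next
    case 3 then show ?thesis using ext_equiv_diff_not_adjacent[OF Z1 Z2 e12 st wv] v w by blast
  next
    case 4 then show ?thesis using ext_equiv_diff_not_adjacent[OF Z1 Z2 e12 st vw] v w by blast
  qed
qed

lemma ext_equiv_trans:
  assumes "extremal_assignment n Z1" "extremal_assignment n Z2" "extremal_assignment n Z3"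
    and "ext_equiv n Z1 Z2" "ext_equiv n Z2 Z3"
  shows "ext_equiv n Z1 Z3"
  unfolding ext_equiv_def
  using assms deg3_isolated_diff_trans[of n Z1 Z2 Z3] deg3_isolated_diff_trans[of n Z3 Z2 Z1]
    ext_equiv_sym by blast

theorem mainTheorem1:
  assumes "n \<ge> 3"
  shows "equiv (ExtAssign n)
           {(Z1, Z2). Z1 \<in> ExtAssign n \<and> Z2 \<in> ExtAssign n \<and> ext_equiv n Z1 Z2}"
  by (rule equivI)
    (auto simp: ExtAssign_def refl_on_def sym_def trans_def
      intro: ext_equiv_refl ext_equiv_sym ext_equiv_trans)

end
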